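(* For every $n\ge1$, the positive monomial $P(x)=\prod_{i=1}^n x_i$ on $\{0,1\}^n$ has a quadratization using $\lfloor (n-1)/2\rfloor$ auxiliary variables.
   Context: A quadratization of $f:\{0,1\}^n\to\mathbb{R}$ using $m$ auxiliary variables is a polynomial $g(x,y)$ of degree at most $2$ in $x_1,\ldots,x_n,y_1,\ldots,y_m$ such that $f(x)=\min\{g(x,y):y\in\{0,1\}^m\}$ for all $x\in\{0,1\}^n$. *)

theory Defs
  imports Complex_Main
begin

text \<open>Points of {0,1}^N, encoded as functions nat => real that are 0/1 on
  indices below N and 0 elsewhere (so that the set is finite).\<close>
definition bin_vecs :: "nat \<Rightarrow> (nat \<Rightarrow> real) set" where
  "bin_vecs N = {z. \<forall>i. (i < N \<longrightarrow> z i \<in> {0, 1}) \<and> (N \<le> i \<longrightarrow> z i = 0)}"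

definition join :: "nat \<Rightarrow> (nat \<Rightarrow> real) \<Rightarrow> (nat \<Rightarrow> real) \<Rightarrow> (nat \<Rightarrow> real)" where
  "join n x y = (\<lambda>i. if i < n then x i else y (i - n))"

definition quad_poly :: "nat \<Rightarrow> ((nat \<Rightarrow> real) \<Rightarrow> real) \<Rightarrow> bool" where
  "quad_poly N g \<longleftrightarrow> (\<exists>(c::real) (a::nat \<Rightarrow> real) (b::nat \<Rightarrow> nat \<Rightarrow> real).
     \<forall>z. g z = c + (\<Sum>i<N. a i * z i) + (\<Sum>i<N. \<Sum>j<N. b i j * z i * z j))"

definition quadratization :: "nat \<Rightarrow> nat \<Rightarrow> ((nat \<Rightarrow> real) \<Rightarrow> real) \<Rightarrow> ((nat \<Rightarrow> real) \<Rightarrow> real) \<Rightarrow> bool" where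
  "quadratization n m f g \<longleftrightarrow> quad_poly (n + m) g \<and>
     (\<forall>x \<in> bin_vecs n. f x = Min ((\<lambda>y. g (join n x y)) ` bin_vecs m))"

end

theory Submission
  imports Defs
begin

(* Pad n to the even number 2m+2 = n + e with a constant e in {0,1} and put
   S = x_1 + ... + x_n + e.  The polynomial
       g(x,y) = S(S-1)/2 + sum_{k<m} y_k (4k+3-2S)
   has degree 2.  Being linear in y, its minimum over y in {0,1}^m is
   S(S-1)/2 + sum_{k<m} min(0, 4k+3-2S), and an arithmetic identity shows that
   this equals 1 if S = 2m+2 (all x_i = 1) and 0 for every smaller value of S. *)

lemma sum_lessThan_add:
  fixes f :: "nat \<Rightarrow> 'a::comm_monoid_add"
  shows "(\<Sum>i<n + m. f i) = (\<Sum>i<n. f i) + (\<Sum>k<m. f (n + k))"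
  by (induction m) (auto simp: add.assoc)

lemma linear_form_blocks:
  fixes n m :: nat and z :: "nat \<Rightarrow> real"
  shows "(\<Sum>i<n + m. (if i < n then a i else b (i - n)) * z i)
     = (\<Sum>i<n. a i * z i) + (\<Sum>k<m. b k * z (n + k))"
  unfolding sum_lessThan_add by simp

lemma quad_poly_add:
  assumes "quad_poly N f" and "quad_poly N g"
  shows "quad_poly N (\<lambda>z. f z + g z)"
proof -
  obtain c a b where f: "\<And>z. f z = c + (\<Sum>i<N. a i * z i) + (\<Sum>i<N. \<Sum>j<N. b i j * z i * z j)"
    using assms(1) unfolding quad_poly_def by blast
  obtain c' a' b' where g: "\<And>z. g z = c' + (\<Sum>i<N. a' i * z i) + (\<Sum>i<N. \<Sum>j<N. b' i j * z i * z j)"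
    using assms(2) unfolding quad_poly_def by blast
  have "f z + g z = (c + c') + (\<Sum>i<N. (a i + a' i) * z i)
                    + (\<Sum>i<N. \<Sum>j<N. (b i j + b' i j) * z i * z j)" for z
  proof -
    have "(\<Sum>i<N. (a i + a' i) * z i) = (\<Sum>i<N. a i * z i) + (\<Sum>i<N. a' i * z i)"
      by (simp add: distrib_right sum.distrib)
    moreover have "(\<Sum>i<N. \<Sum>j<N. (b i j + b' i j) * z i * z j)
        = (\<Sum>i<N. \<Sum>j<N. b i j * z i * z j) + (\<Sum>i<N. \<Sum>j<N. b' i j * z i * z j)"
      by (simp add: distrib_right sum.distrib)
    ultimately show ?thesis
      unfolding f g by linarith
  qed
  then show ?thesis
    unfolding quad_poly_def
    by (intro exI[of _ "c + c'"] exI[of _ "\<lambda>i. a i + a' i"] exI[of _ "\<lambda>i j. b i j + b' i j"]) simp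
qed

lemma quad_poly_scale:
  assumes "quad_poly N f"
  shows "quad_poly N (\<lambda>z. r * f z)"
proof -
  obtain c a b where f: "\<And>z. f z = c + (\<Sum>i<N. a i * z i) + (\<Sum>i<N. \<Sum>j<N. b i j * z i * z j)"
    using assms unfolding quad_poly_def by blast
  have "r * f z = r * c + (\<Sum>i<N. (r * a i) * z i) + (\<Sum>i<N. \<Sum>j<N. (r * b i j) * z i * z j)" for z
    by (simp add: f distrib_left sum_distrib_left mult.assoc)
  then show ?thesis
    unfolding quad_poly_def by (intro exI[of _ "r * c"] exI[of _ "\<lambda>i. r * a i"] exI[of _ "\<lambda>i j. r * b i j"]) simp
qed

lemma quad_poly_affine: "quad_poly N (\<lambda>z. c + (\<Sum>i<N. a i * z i))"
  unfolding quad_poly_def by (intro exI[of _ c] exI[of _ a] exI[of _ "\<lambda>_ _. 0"]) simp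

lemma quad_poly_affine_product:
  "quad_poly N (\<lambda>z. (c + (\<Sum>i<N. a i * z i)) * (d + (\<Sum>i<N. b i * z i)))"
proof -
  have "(c + (\<Sum>i<N. a i * z i)) * (d + (\<Sum>i<N. b i * z i))
      = c * d + (\<Sum>i<N. (c * b i + d * a i) * z i) + (\<Sum>i<N. \<Sum>j<N. (a i * b j) * z i * z j)" for z
  proof -
    have quadratic: "(\<Sum>i<N. a i * z i) * (\<Sum>j<N. b j * z j) = (\<Sum>i<N. \<Sum>j<N. (a i * b j) * z i * z j)"
      by (simp add: sum_product mult_ac)
    have linear: "c * (\<Sum>i<N. b i * z i) + d * (\<Sum>i<N. a i * z i) = (\<Sum>i<N. (c * b i + d * a i) * z i)"
      by (simp add: sum_distrib_left distrib_right sum.distrib mult.assoc)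
    have expand: "(c + A) * (d + B) = c * d + (c * B + d * A) + A * B" for A B :: real
      by algebra
    show ?thesis
      unfolding expand linear quadratic ..
  qed
  then show ?thesis
    unfolding quad_poly_def
    by (intro exI[of _ "c * d"] exI[of _ "\<lambda>i. c * b i + d * a i"] exI[of _ "\<lambda>i j. a i * b j"]) simp
qed

definition monomial_quad :: "nat \<Rightarrow> nat \<Rightarrow> real \<Rightarrow> (nat \<Rightarrow> real) \<Rightarrow> real" where
  "monomial_quad n m e z =
     (let S = (\<Sum>i<n. z i) + e in S * (S - 1) / 2 + (\<Sum>k<m. z (n + k) * (4 * real k + 3 - 2 * S)))"

(* Expanded, g is a combination of affine forms and products of two affine forms. *)
lemma quad_poly_monomial_quad: "quad_poly (n + m) (monomial_quad n m e)"
proof -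
  define ind_x :: "nat \<Rightarrow> real" where "ind_x i = (if i < n then 1 else 0)" for i
  define ind_y :: "nat \<Rightarrow> real" where "ind_y i = (if i < n then 0 else 1)" for i
  define lin_y :: "nat \<Rightarrow> real" where "lin_y i = (if i < n then 0 else 4 * real (i - n) + 3)" for i
  have sum_x: "(\<Sum>i<n + m. ind_x i * z i) = (\<Sum>i<n. z i)" for z
    by (simp add: ind_x_def linear_form_blocks[where a = "\<lambda>_. 1" and b = "\<lambda>_. 0"])
  have sum_y: "(\<Sum>i<n + m. ind_y i * z i) = (\<Sum>k<m. z (n + k))" for z
    by (simp add: ind_y_def linear_form_blocks[where a = "\<lambda>_. 0" and b = "\<lambda>_. 1"])
  have sum_lin_y: "(\<Sum>i<n + m. lin_y i * z i) = (\<Sum>k<m. (4 * real k + 3) * z (n + k))" for z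
    by (simp add: lin_y_def linear_form_blocks[where a = "\<lambda>_. 0" and b = "\<lambda>k. 4 * real k + 3"])
  have aux_part: "(\<Sum>k<m. z (n + k) * (4 * real k + 3 - 2 * S))
      = (\<Sum>k<m. (4 * real k + 3) * z (n + k)) - 2 * S * (\<Sum>k<m. z (n + k))" for z S
  proof -
    have "(\<Sum>k<m. z (n + k) * (4 * real k + 3 - 2 * S))
        = (\<Sum>k<m. (4 * real k + 3) * z (n + k) - (2 * S) * z (n + k))"
      by (rule sum.cong) (simp_all add: algebra_simps)
    then show ?thesis
      by (simp only: sum_subtractf sum_distrib_left mult.assoc)
  qed
  have rearrange: "(T + e) * (T + e - 1) / 2 + (L - 2 * (T + e) * Y)
      = (1/2) * ((e + T) * ((e - 1) + T)) + ((0 + L) + (-2) * ((e + T) * (0 + Y)))" for T L Y :: real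
    by (simp add: field_simps)
  have expand: "monomial_quad n m e z
      = (1/2) * ((e + (\<Sum>i<n + m. ind_x i * z i)) * ((e - 1) + (\<Sum>i<n + m. ind_x i * z i)))
        + ((0 + (\<Sum>i<n + m. lin_y i * z i))
        + (-2) * ((e + (\<Sum>i<n + m. ind_x i * z i)) * (0 + (\<Sum>i<n + m. ind_y i * z i))))" for z
    unfolding sum_x sum_y sum_lin_y monomial_quad_def Let_def aux_part rearrange ..
  show ?thesis
    unfolding expand
    by (intro quad_poly_add quad_poly_scale quad_poly_affine quad_poly_affine_product)
qed

lemma monomial_quad_join:
  assumes "(\<Sum>i<n. x i) = s"
  shows "monomial_quad n m e (join n x y)
           = (s + e) * (s + e - 1) / 2 + (\<Sum>k<m. y k * (4 * real k + 3 - 2 * (s + e)))"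
  using assms unfolding monomial_quad_def join_def Let_def by simp

lemma finite_bin_vecs: "finite (bin_vecs m)"
proof (rule finite_subset)
  show "bin_vecs m \<subseteq> (\<lambda>S i. if i \<in> S then 1 else 0) ` Pow {..<m}"
  proof
    fix z assume z: "z \<in> bin_vecs m"
    have "z i = (if i \<in> {i. i < m \<and> z i = 1} then 1 else 0)" for i
      using z unfolding bin_vecs_def by (cases "i < m") auto
    then have "z = (\<lambda>i. if i \<in> {i. i < m \<and> z i = 1} then 1 else 0)"
      by blast
    then show "z \<in> (\<lambda>S i. if i \<in> S then 1 else 0) ` Pow {..<m}" by blast
  qed
qed simp

(* A linear function of y is minimized over {0,1}^m by switching on exactly the
   variables with negative coefficient. *)
lemma Min_linear_bin_vecs:
  "Min ((\<lambda>y. A + (\<Sum>k<m. y k * w k)) ` bin_vecs m) = A + (\<Sum>k<m. min 0 (w k))"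
proof (rule Min_eqI)
  show "finite ((\<lambda>y. A + (\<Sum>k<m. y k * w k)) ` bin_vecs m)"
    using finite_bin_vecs by simp
next
  fix v assume "v \<in> (\<lambda>y. A + (\<Sum>k<m. y k * w k)) ` bin_vecs m"
  then obtain y where y: "y \<in> bin_vecs m" and v: "v = A + (\<Sum>k<m. y k * w k)" by blast
  have "(\<Sum>k<m. min 0 (w k)) \<le> (\<Sum>k<m. y k * w k)"
  proof (rule sum_mono)
    fix k assume "k \<in> {..<m}"
    then have "y k = 0 \<or> y k = 1" using y unfolding bin_vecs_def by auto
    then show "min 0 (w k) \<le> y k * w k" by auto
  qed
  then show "A + (\<Sum>k<m. min 0 (w k)) \<le> v"
    unfolding v by simp
next
  define y_opt where "y_opt k = (if k < m \<and> w k < 0 then 1 else (0::real))" for k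
  have "y_opt \<in> bin_vecs m" unfolding y_opt_def bin_vecs_def by auto
  moreover have "(\<Sum>k<m. y_opt k * w k) = (\<Sum>k<m. min 0 (w k))"
    by (rule sum.cong) (auto simp: y_opt_def)
  ultimately show "A + (\<Sum>k<m. min 0 (w k)) \<in> (\<lambda>y. A + (\<Sum>k<m. y k * w k)) ` bin_vecs m"
    by (intro image_eqI[where x = y_opt]) simp_all
qed

(* If 2m <= s, every coefficient 4k+3-2s (k < m) is negative, and their sum is an
   arithmetic series. *)
lemma sum_min_all_negative:
  fixes s :: nat
  assumes "2 * m \<le> s"
  shows "(\<Sum>k<m. min 0 (4 * real k + 3 - 2 * real s)) = 2 * real m ^ 2 + real m - 2 * real s * real m"
  using assms
proof (induction m)
  case 0
  then show ?case by simp
next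
  case (Suc m)
  have "min 0 (4 * real m + 3 - 2 * real s) = 4 * real m + 3 - 2 * real s"
    using Suc.prems by auto
  then show ?case
    using Suc by (simp add: power2_eq_square algebra_simps)
qed

(* The minimized polynomial is the indicator of S = 2m+2 on 0 <= S <= 2m+2.
   Induction on m: increasing m by one adds the term min(0, 4m+3-2S), which
   vanishes for S <= 2m+2, and the two new values S = 2m+3, 2m+4 are checked
   using the closed form above. *)
lemma threshold_identity:
  fixes s :: nat
  assumes "s \<le> 2 * m + 2"
  shows "real s * (real s - 1) / 2 + (\<Sum>k<m. min 0 (4 * real k + 3 - 2 * real s))
           = (if s = 2 * m + 2 then 1 else 0)"
  using assms
proof (induction m arbitrary: s)
  case 0
  then have "s = 0 \<or> s = 1 \<or> s = 2" by auto
  then show ?case by auto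
next
  case (Suc m)
  show ?case
  proof (cases "s \<le> 2 * m + 2")
    case True
    note IH = Suc.IH[OF True]
    show ?thesis
    proof (cases "s = 2 * m + 2")
      case True
      then show ?thesis using IH by (simp add: algebra_simps)
    next
      case False
      then have "min 0 (4 * real m + 3 - 2 * real s) = 0"
        using \<open>s \<le> 2 * m + 2\<close> by auto
      then show ?thesis using IH False by simp
    qed
  next
    case False
    then have "s = 2 * m + 3 \<or> s = 2 * m + 4"
      using Suc.prems by auto
    then consider "s = 2 * m + 3" | "s = 2 * m + 4"
      by blast
    moreover have all_negative: "2 * Suc m \<le> s"
      using False by simp
    ultimately show ?thesis
    proof cases
      case 1
      then have real_s: "real s = 2 * real m + 3" by simp
      show ?thesis
        unfolding sum_min_all_negative[OF all_negative] unfolding real_s using 1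
        by (simp add: power2_eq_square algebra_simps)
    next
      case 2
      then have real_s: "real s = 2 * real m + 4" by simp
      show ?thesis
        unfolding sum_min_all_negative[OF all_negative] unfolding real_s using 2
        by (simp add: power2_eq_square algebra_simps)
    qed
  qed
qed

lemma bin_sum_prod:
  fixes x :: "nat \<Rightarrow> real"
  assumes "\<forall>i<n. x i \<in> {0, 1}"
  shows "\<exists>s::nat. s \<le> n \<and> (\<Sum>i<n. x i) = real s \<and> (\<Prod>i<n. x i) = (if s = n then 1 else 0)"
  using assms
proof (induction n)
  case 0
  then show ?case by simp
next
  case (Suc n)
  then obtain s where s: "s \<le> n" "(\<Sum>i<n. x i) = real s" "(\<Prod>i<n. x i) = (if s = n then 1 else 0)"
    by auto
  have "x n = 0 \<or> x n = 1" using Suc.prems by auto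
  then show ?case
  proof
    assume "x n = 0"
    then show ?thesis using s by (intro exI[of _ s]) auto
  next
    assume "x n = 1"
    then show ?thesis using s by (intro exI[of _ "Suc s"]) auto
  qed
qed

lemma monomial_quad_min:
  fixes e :: nat
  assumes pad: "n + e = 2 * m + 2" and x: "x \<in> bin_vecs n"
  shows "Min ((\<lambda>y. monomial_quad n m e (join n x y)) ` bin_vecs m) = (\<Prod>i<n. x i)"
proof -
  obtain s where s: "s \<le> n" "(\<Sum>i<n. x i) = real s" "(\<Prod>i<n. x i) = (if s = n then 1 else 0)"
    using bin_sum_prod[of n x] x unfolding bin_vecs_def by auto
  have "Min ((\<lambda>y. monomial_quad n m e (join n x y)) ` bin_vecs m)
      = real (s + e) * (real (s + e) - 1) / 2
        + (\<Sum>k<m. min 0 (4 * real k + 3 - 2 * real (s + e)))"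
    unfolding monomial_quad_join[OF s(2)] Min_linear_bin_vecs by simp
  also have "\<dots> = (if s + e = 2 * m + 2 then 1 else 0)"
    using threshold_identity[of "s + e" m] s(1) pad by simp
  finally show ?thesis
    using s(3) pad by auto
qed

theorem theorem5:
  fixes n :: nat
  assumes "n \<ge> 1"
  shows "\<exists>g. quadratization n ((n - 1) div 2) (\<lambda>x. \<Prod>i<n. x i) g"
proof -
  define m where "m = (n - 1) div 2"
  define e :: nat where "e = (if even n then 0 else 1)"
  have pad: "n + e = 2 * m + 2"
    using assms unfolding m_def e_def by (cases "even n") (auto elim!: evenE oddE)
  have "quadratization n m (\<lambda>x. \<Prod>i<n. x i) (monomial_quad n m e)"
    unfolding quadratization_def
    using quad_poly_monomial_quad monomial_quad_min[OF pad] by simp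
  then show ?thesis
    unfolding m_def by blast
qed

end
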